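(* Let $Y$ be a real normed space, $K\subset Y$ a pointed closed convex cone, and $A,B,C\subset Y$ nonempty sets such that $C$ is $K$-bounded and $$A+C\subset\operatorname{cl}(C+B+K).$$ Then $A\subset\operatorname{cl}\operatorname{conv}(B+K)$.
   Context: A nonempty set $C\subset Y$ is $K$-bounded if there is a bounded set $M\subset Y$ with $C\subset M+K$. $\operatorname{cl}$ denotes norm closure and $\operatorname{conv}$ the convex hull. *)

theory Defs
  imports "HOL-Analysis.Analysis"
begin

definition msum :: "'a::real_normed_vector set \<Rightarrow> 'a set \<Rightarrow> 'a set" where
  "msum A B = {a + b | a b. a \<in> A \<and> b \<in> B}"

definition pointed_cone :: "'a::real_normed_vector set \<Rightarrow> bool" where
  "pointed_cone K \<longleftrightarrow> cone K \<and> K \<inter> uminus ` K = {0}"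

definition K_bounded :: "'a::real_normed_vector set \<Rightarrow> 'a set \<Rightarrow> bool" where
  "K_bounded K C \<longleftrightarrow> C \<noteq> {} \<and> (\<exists>M. bounded M \<and> C \<subseteq> msum M K)"

end

theory Submission
  imports Defs
begin

text \<open>
  Fix \<open>a \<in> A\<close> and \<open>\<epsilon> > 0\<close>. Starting from some \<open>c\<^sub>0 \<in> C\<close>, the inclusion
  \<open>a + c\<^sub>i \<in> cl(C + B + K)\<close> yields \<open>c\<^sub>i\<^sub>+\<^sub>1 \<in> C\<close> and \<open>w\<^sub>i \<in> B + K\<close> with
  \<open>\<parallel>a + c\<^sub>i - c\<^sub>i\<^sub>+\<^sub>1 - w\<^sub>i\<parallel> < \<epsilon>\<close>. Summing \<open>n\<close> of these steps telescopes to
  \<open>\<parallel>n a - \<Sum> w\<^sub>i - (c\<^sub>n - c\<^sub>0)\<parallel> < n \<epsilon>\<close>. Writing \<open>c\<^sub>n = m + k\<close> with \<open>m\<close> in a bounded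
  set and \<open>k \<in> K\<close>, the vector \<open>k\<close> is absorbed into one \<open>w\<^sub>i\<close> (as \<open>B + K + K = B + K\<close>),
  and the remaining error \<open>\<parallel>c\<^sub>0 - m\<parallel>/n\<close> vanishes as \<open>n \<rightarrow> \<infinity>\<close>. Hence \<open>a\<close> is a limit of
  averages of points of \<open>B + K\<close>.
\<close>

lemma msum_add_convex_cone:
  assumes "convex K" "cone K" "x \<in> msum B K" "k \<in> K"
  shows "x + k \<in> msum B K"
proof -
  obtain b k' where "b \<in> B" "k' \<in> K" "x = b + k'"
    using assms(3) unfolding msum_def by blast
  moreover have "k' + k \<in> K"
    using assms(1,2,4) \<open>k' \<in> K\<close> convex_cone by blast
  ultimately show ?thesis
    unfolding msum_def by (metis (mono_tags, lifting) add.assoc mem_Collect_eq)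
qed

lemma average_mem_convex_hull:
  assumes "n > 0" "\<And>i. i < n \<Longrightarrow> x i \<in> S"
  shows "(1 / real n) *\<^sub>R (\<Sum>i<n. x i) \<in> convex hull S"
  unfolding scaleR_sum_right
  by (rule convex_sum) (use assms in \<open>auto intro: hull_inc simp: convex_convex_hull\<close>)

lemma norm_telescoping_average_le:
  fixes a m k :: "'a::real_normed_vector"
  assumes "n > 0"
    and step: "\<And>i. i < n \<Longrightarrow> norm (a + c i - c (Suc i) - w i) \<le> e"
    and "c n = m + k"
  shows "norm (a - (1 / real n) *\<^sub>R (k + (\<Sum>i<n. w i))) \<le> e + norm (c 0 - m) / real n"
proof -
  let ?y = "(1 / real n) *\<^sub>R (k + (\<Sum>i<n. w i))"
  have "(\<Sum>i<n. a + c i - c (Suc i) - w i) = real n *\<^sub>R a + (c 0 - c n) - (\<Sum>i<n. w i)"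
    using sum_lessThan_telescope'[of c n]
    by (simp add: sum_subtractf sum.distrib sum_constant_scaleR add_diff_eq[symmetric])
  then have "real n *\<^sub>R (a - ?y) = (\<Sum>i<n. a + c i - c (Suc i) - w i) - (c 0 - m)"
    using \<open>n > 0\<close> \<open>c n = m + k\<close> by (simp add: scaleR_diff_right scaleR_add_right)
  then have "real n * norm (a - ?y) = norm ((\<Sum>i<n. a + c i - c (Suc i) - w i) - (c 0 - m))"
    by (metis norm_scaleR abs_of_nat)
  also have "\<dots> \<le> norm (\<Sum>i<n. a + c i - c (Suc i) - w i) + norm (c 0 - m)"
    by (rule norm_triangle_ineq4)
  also have "\<dots> \<le> (\<Sum>i<n. norm (a + c i - c (Suc i) - w i)) + norm (c 0 - m)"
    using norm_sum by (rule add_right_mono)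
  also have "\<dots> \<le> real n * e + norm (c 0 - m)"
    using sum_mono[of "{..<n}", OF step] by simp
  finally show ?thesis
    using \<open>n > 0\<close> by (simp add: field_simps)
qed

lemma approximating_chain:
  assumes "\<forall>c\<in>C. \<exists>c'\<in>C. \<exists>w\<in>W. norm (a + c - c' - w) < e" and "c\<^sub>0 \<in> C"
  obtains c w where "c 0 = c\<^sub>0" "\<And>i. c i \<in> C" "\<And>i. w i \<in> W"
    "\<And>i. norm (a + c i - c (Suc i) - w i) < e"
proof -
  have "\<exists>c. \<forall>i. (c i \<in> C \<and> (i = 0 \<longrightarrow> c i = c\<^sub>0))
      \<and> (\<exists>w\<in>W. norm (a + c i - c (Suc i) - w) < e)"
    by (rule dependent_nat_choice) (use assms in blast)+
  then obtain c where c: "\<And>i. c i \<in> C \<and> (i = 0 \<longrightarrow> c i = c\<^sub>0)"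
    "\<And>i. \<exists>w\<in>W. norm (a + c i - c (Suc i) - w) < e"
    by blast
  then obtain w where "\<And>i. w i \<in> W \<and> norm (a + c i - c (Suc i) - w i) < e"
    by metis
  with c that show ?thesis by blast
qed

lemma mem_closure_convex_hull_msum:
  assumes "convex K" "cone K" "K_bounded K C"
    and "msum A C \<subseteq> closure (msum (msum C B) K)" and "a \<in> A"
  shows "a \<in> closure (convex hull (msum B K))"
  unfolding closure_approachable
proof (intro allI impI)
  fix e :: real assume "e > 0"
  obtain M c\<^sub>0 where "bounded M" "C \<subseteq> msum M K" "c\<^sub>0 \<in> C"
    using assms(3) unfolding K_bounded_def by blast
  obtain R where R: "\<And>m. m \<in> M \<Longrightarrow> norm m \<le> R"
    using \<open>bounded M\<close> unfolding bounded_iff by blast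
  have "\<exists>c'\<in>C. \<exists>w\<in>msum B K. norm (a + c - c' - w) < e / 2" if "c \<in> C" for c
  proof -
    have "a + c \<in> closure (msum (msum C B) K)"
      using assms(4,5) that unfolding msum_def by blast
    then obtain c' b k where "c' \<in> C" "b \<in> B" "k \<in> K" "dist (a + c) (c' + b + k) < e / 2"
      using closure_approachableD[of "a + c" _ "e / 2"] \<open>e > 0\<close> unfolding msum_def by fastforce
    then show ?thesis
      unfolding msum_def by (intro bexI[of _ c'] bexI[of _ "b + k"]) (auto simp: dist_norm algebra_simps)
  qed
  then obtain c w where c: "c 0 = c\<^sub>0" "\<And>i. c i \<in> C" and w: "\<And>i. w i \<in> msum B K"
    and step: "\<And>i. norm (a + c i - c (Suc i) - w i) < e / 2"
    using approximating_chain[of C "msum B K" a "e / 2" c\<^sub>0] \<open>c\<^sub>0 \<in> C\<close> by blast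
  obtain n :: nat where n: "real n > max 0 (2 * (norm c\<^sub>0 + R) / e)"
    using reals_Archimedean2 by blast
  obtain m k where "m \<in> M" "k \<in> K" "c n = m + k"
    using c(2) \<open>C \<subseteq> msum M K\<close> unfolding msum_def by blast
  define y where "y = (1 / real n) *\<^sub>R (k + (\<Sum>i<n. w i))"
  have "y = (1 / real n) *\<^sub>R (\<Sum>i<n. w i + (if i = 0 then k else 0))"
    using n by (simp add: y_def sum.distrib add.commute)
  then have y: "y \<in> convex hull (msum B K)"
    using n w msum_add_convex_cone[OF assms(1,2) _ \<open>k \<in> K\<close>]
    by (auto intro!: average_mem_convex_hull)
  have "norm (a - y) \<le> e / 2 + norm (c 0 - m) / real n"
    unfolding y_def using n step \<open>c n = m + k\<close>
    by (intro norm_telescoping_average_le) (auto intro: less_imp_le)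
  moreover have "norm (c 0 - m) / real n < e / 2"
    using n \<open>e > 0\<close> norm_triangle_ineq4[of c\<^sub>0 m] R[OF \<open>m \<in> M\<close>] c(1)
    by (simp add: field_simps)
  ultimately have "dist y a < e"
    unfolding dist_norm norm_minus_commute[of y a] by linarith
  with y show "\<exists>y\<in>convex hull msum B K. dist y a < e"
    by blast
qed

theorem mainTheorem3:
  fixes K A B C :: "'a::real_normed_vector set"
  assumes "pointed_cone K" and "closed K" and "convex K"
    and "A \<noteq> {}" and "B \<noteq> {}" and "C \<noteq> {}"
    and "K_bounded K C"
    and "msum A C \<subseteq> closure (msum (msum C B) K)"
  shows "A \<subseteq> closure (convex hull (msum B K))"
  using mem_closure_convex_hull_msum[OF assms(3) _ assms(7,8)] assms(1)
  unfolding pointed_cone_def by blast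

end
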